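(* Let $\omega\ge 2$ and let $\Gamma$ be a connected, non-complete, $\omega$-clique regular finite simple graph. Then the largest adjacency eigenvalue $\mu_{\max}$ of the line graph $L(\Gamma)$ satisfies $2\omega-4<\mu_{\max}$.
   Context: A graph is $\omega$-clique regular if it has a nonempty edge set and every edge lies in exactly one clique of order $\omega$. $L(\Gamma)$ is the line graph of $\Gamma$ (vertices are edges of $\Gamma$, adjacent iff they share an endpoint). *)

theory Defs
  imports Complex_Main
begin

definition simple_graph :: "'a set \<Rightarrow> 'a set set \<Rightarrow> bool" where
  "simple_graph V E \<longleftrightarrow> finite V \<and> (\<forall>e\<in>E. e \<subseteq> V \<and> card e = 2)"

definition adjacent :: "'a set set \<Rightarrow> 'a \<Rightarrow> 'a \<Rightarrow> bool" where
  "adjacent E u v \<longleftrightarrow> {u, v} \<in> E"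

definition connected_graph :: "'a set \<Rightarrow> 'a set set \<Rightarrow> bool" where
  "connected_graph V E \<longleftrightarrow> V \<noteq> {} \<and>
     (\<forall>u\<in>V. \<forall>v\<in>V. (\<lambda>x y. x \<in> V \<and> y \<in> V \<and> adjacent E x y)\<^sup>*\<^sup>* u v)"

definition complete_graph :: "'a set \<Rightarrow> 'a set set \<Rightarrow> bool" where
  "complete_graph V E \<longleftrightarrow> (\<forall>u\<in>V. \<forall>v\<in>V. u \<noteq> v \<longrightarrow> adjacent E u v)"

definition clique_of_order :: "'a set \<Rightarrow> 'a set set \<Rightarrow> nat \<Rightarrow> 'a set \<Rightarrow> bool" where
  "clique_of_order V E w K \<longleftrightarrow> K \<subseteq> V \<and> card K = w \<and>
     (\<forall>u\<in>K. \<forall>v\<in>K. u \<noteq> v \<longrightarrow> adjacent E u v)"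

definition clique_regular :: "nat \<Rightarrow> 'a set \<Rightarrow> 'a set set \<Rightarrow> bool" where
  "clique_regular w V E \<longleftrightarrow> E \<noteq> {} \<and>
     (\<forall>e\<in>E. \<exists>!K. clique_of_order V E w K \<and> e \<subseteq> K)"

definition line_adj :: "'a set set \<Rightarrow> 'a set \<Rightarrow> 'a set \<Rightarrow> bool" where
  "line_adj E e f \<longleftrightarrow> e \<in> E \<and> f \<in> E \<and> e \<noteq> f \<and> e \<inter> f \<noteq> {}"

definition adj_eigenvalues :: "'b set \<Rightarrow> ('b \<Rightarrow> 'b \<Rightarrow> bool) \<Rightarrow> real set" where
  "adj_eigenvalues W adj = {\<mu>. \<exists>x :: 'b \<Rightarrow> real. (\<exists>v\<in>W. x v \<noteq> 0) \<and>
      (\<forall>v\<in>W. (\<Sum>u\<in>{u\<in>W. adj v u}. x u) = \<mu> * x v)}"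

definition largest_adj_eigenvalue :: "'b set \<Rightarrow> ('b \<Rightarrow> 'b \<Rightarrow> bool) \<Rightarrow> real" where
  "largest_adj_eigenvalue W adj = Max (adj_eigenvalues W adj)"

end

theory Submission
  imports Defs "HOL-Analysis.Function_Topology" "Jordan_Normal_Form.Spectral_Radius"
begin

text \<open>For a symmetric adjacency operator \<open>A\<close>, a maximiser of \<open>\<langle>x, A x\<rangle>\<close> on the
  (compact) unit sphere is an eigenvector, so the largest eigenvalue bounds every Rayleigh
  quotient. Let \<open>K\<close> be an \<open>\<omega>\<close>-clique (clique regularity is only used to get one). In the
  line graph every edge of \<open>K\<close> meets \<open>2\<omega> - 4\<close> other edges of \<open>K\<close>, so the indicator
  vector of these edges has quotient \<open>2\<omega> - 4\<close>. As the graph is connected and not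
  complete, some edge \<open>f\<close> leaves \<open>K\<close>; adding a small multiple of the indicator of \<open>f\<close>
  strictly increases the quotient.\<close>

definition adj_mult :: "'b set \<Rightarrow> ('b \<Rightarrow> 'b \<Rightarrow> bool) \<Rightarrow> ('b \<Rightarrow> real) \<Rightarrow> 'b \<Rightarrow> real" where
  "adj_mult W adj x v = (\<Sum>u\<in>{u\<in>W. adj v u}. x u)"

definition inner_on :: "'b set \<Rightarrow> ('b \<Rightarrow> real) \<Rightarrow> ('b \<Rightarrow> real) \<Rightarrow> real" where
  "inner_on W x y = (\<Sum>v\<in>W. x v * y v)"

lemma adj_mult_eq_sum_if:
  "finite W \<Longrightarrow> adj_mult W adj x v = (\<Sum>u\<in>W. if adj v u then x u else 0)"
  unfolding adj_mult_def by (simp add: sum.inter_filter)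

lemma adj_mult_cong: "(\<And>v. v \<in> W \<Longrightarrow> x v = x' v) \<Longrightarrow> adj_mult W adj x w = adj_mult W adj x' w"
  unfolding adj_mult_def by auto

lemma adj_mult_indicator:
  "finite W \<Longrightarrow> adj_mult W adj (indicator S) v = real (card {u\<in>W. adj v u \<and> u \<in> S})"
  unfolding adj_mult_def indicator_def by (simp add: sum.If_cases Int_def)

lemma adj_mult_add_scaled:
  "adj_mult W adj (\<lambda>v. x v + t * y v) w = adj_mult W adj x w + t * adj_mult W adj y w"
  unfolding adj_mult_def by (simp add: sum.distrib sum_distrib_left)

lemma inner_on_cong:
  "(\<And>v. v \<in> W \<Longrightarrow> x v = x' v) \<Longrightarrow> (\<And>v. v \<in> W \<Longrightarrow> y v = y' v) \<Longrightarrow> inner_on W x y = inner_on W x' y'"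
  unfolding inner_on_def by auto

lemma inner_on_self_nonneg: "inner_on W x x \<ge> 0"
  unfolding inner_on_def by (intro sum_nonneg) auto

lemma inner_on_self_eq_0D: "finite W \<Longrightarrow> inner_on W x x = 0 \<Longrightarrow> v \<in> W \<Longrightarrow> x v = 0"
  unfolding inner_on_def using sum_nonneg_eq_0_iff[of W "\<lambda>v. x v * x v"] by auto

lemma inner_on_indicator:
  assumes "finite W" "S \<subseteq> W"
  shows "inner_on W (indicator S) y = sum y S"
proof -
  have "inner_on W (indicator S) y = (\<Sum>v\<in>W. if v \<in> S then y v else 0)"
    unfolding inner_on_def indicator_def by (intro sum.cong) auto
  also have "\<dots> = sum y S"
    using assms by (simp add: sum.If_cases Int_absorb1)
  finally show ?thesis .
qed

lemma inner_on_adj_mult_commute: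
  assumes "finite W" "symp_on W adj"
  shows "inner_on W x (adj_mult W adj y) = inner_on W y (adj_mult W adj x)"
proof -
  have "inner_on W x (adj_mult W adj y) = (\<Sum>v\<in>W. \<Sum>u\<in>W. if adj v u then x v * y u else 0)"
    unfolding inner_on_def adj_mult_eq_sum_if[OF assms(1)]
    by (simp add: sum_distrib_left if_distrib cong: if_cong)
  also have "\<dots> = (\<Sum>u\<in>W. \<Sum>v\<in>W. if adj v u then x v * y u else 0)"
    by (rule sum.swap)
  also have "\<dots> = (\<Sum>u\<in>W. \<Sum>v\<in>W. if adj u v then y u * x v else 0)"
    using assms(2) by (intro sum.cong refl) (auto simp: mult.commute dest: symp_onD)
  also have "\<dots> = inner_on W y (adj_mult W adj x)"
    unfolding inner_on_def adj_mult_eq_sum_if[OF assms(1)]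
    by (simp add: sum_distrib_left if_distrib cong: if_cong)
  finally show ?thesis .
qed

lemma inner_on_add_scaled:
  "inner_on W (\<lambda>v. x v + t * y v) (\<lambda>v. x v + t * y v)
     = inner_on W x x + 2 * t * inner_on W y x + t\<^sup>2 * inner_on W y y"
  unfolding inner_on_def by (simp add: algebra_simps sum.distrib sum_distrib_left power2_eq_square)

lemma adj_form_add_scaled:
  assumes "finite W" "symp_on W adj"
  shows "inner_on W (\<lambda>v. x v + t * y v) (adj_mult W adj (\<lambda>v. x v + t * y v))
     = inner_on W x (adj_mult W adj x) + 2 * t * inner_on W y (adj_mult W adj x)
       + t\<^sup>2 * inner_on W y (adj_mult W adj y)"
proof -
  have "inner_on W (\<lambda>v. x v + t * y v) (adj_mult W adj (\<lambda>v. x v + t * y v))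
      = inner_on W x (adj_mult W adj x) + t * inner_on W x (adj_mult W adj y)
        + t * inner_on W y (adj_mult W adj x) + t\<^sup>2 * inner_on W y (adj_mult W adj y)"
    unfolding adj_mult_add_scaled inner_on_def
    by (simp add: algebra_simps sum.distrib sum_distrib_left power2_eq_square)
  then show ?thesis
    using inner_on_adj_mult_commute[OF assms, of x y] by simp
qed

lemma adj_form_attains_max_on_unit_sphere:
  assumes fin: "finite W" and ne: "W \<noteq> {}"
  obtains x where "inner_on W x x = 1"
    "\<And>y. inner_on W y y = 1 \<Longrightarrow> inner_on W y (adj_mult W adj y) \<le> inner_on W x (adj_mult W adj x)"
proof -
  define T where "T = product_topology (\<lambda>_. euclideanreal) W"
  define C where "C = PiE W (\<lambda>_. {-1..1::real})"
  define S where "S = {x \<in> topspace T. inner_on W x x \<in> {1}}"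
  define q where "q = (\<lambda>x. inner_on W x (adj_mult W adj x))"
  have cont_norm: "continuous_map T euclideanreal (\<lambda>x. inner_on W x x)"
    unfolding inner_on_def T_def
    by (intro continuous_map_sum fin continuous_map_real_mult continuous_map_product_projection) auto
  have cont_q: "continuous_map T euclideanreal q"
    unfolding q_def inner_on_def adj_mult_def T_def
    by (intro continuous_map_sum fin continuous_map_real_mult continuous_map_product_projection)
      (auto simp: fin)
  have bounded: "\<bar>x v\<bar> \<le> 1" if "inner_on W x x = 1" "v \<in> W" for x v
  proof -
    have "x v * x v \<le> inner_on W x x"
      unfolding inner_on_def using member_le_sum[of v W "\<lambda>v. x v * x v"] that fin by auto
    then show ?thesis
      using that abs_le_square_iff[of "x v" 1] by (simp add: power2_eq_square)
  qed
  have "compactin T C"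
    unfolding T_def C_def by (simp add: compactin_PiE)
  moreover have "S \<subseteq> C"
    unfolding S_def C_def T_def using bounded by (auto simp: PiE_iff abs_le_iff extensional_def)
  moreover have "closedin T S"
    unfolding S_def by (rule closedin_continuous_map_preimage[OF cont_norm]) simp
  ultimately have "compactin T S"
    by (rule closed_compactin)
  then have "compact (q ` S)"
    using image_compactin[OF _ cont_q] by simp
  have sphere_in_S: "restrict y W \<in> S" if "inner_on W y y = 1" for y
  proof -
    have "inner_on W (restrict y W) (restrict y W) = 1"
      using that by (simp add: inner_on_def)
    then show ?thesis unfolding S_def T_def by (simp add: PiE_iff)
  qed
  obtain v0 where "v0 \<in> W" using ne by auto
  then have "inner_on W (indicator {v0}) (indicator {v0}) = 1"
    using fin by (simp add: inner_on_indicator)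
  then have "q ` S \<noteq> {}" using sphere_in_S by blast
  then obtain x where x: "x \<in> S" "\<And>z. z \<in> S \<Longrightarrow> q z \<le> q x"
    using compact_attains_sup[OF \<open>compact (q ` S)\<close>] by auto
  show thesis
  proof
    show "inner_on W x x = 1" using x(1) unfolding S_def by simp
    fix y assume "inner_on W y y = 1"
    then have "q (restrict y W) \<le> q x" using x(2) sphere_in_S by blast
    moreover have "q (restrict y W) = q y"
      unfolding q_def by (intro inner_on_cong adj_mult_cong) auto
    ultimately show "inner_on W y (adj_mult W adj y) \<le> inner_on W x (adj_mult W adj x)"
      unfolding q_def by simp
  qed
qed

lemma adj_form_le_if_le_on_unit_sphere:
  assumes "finite W"
    and sphere: "\<And>z. inner_on W z z = 1 \<Longrightarrow> inner_on W z (adj_mult W adj z) \<le> lam"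
  shows "inner_on W y (adj_mult W adj y) \<le> lam * inner_on W y y"
proof (cases "inner_on W y y = 0")
  case True
  then have "\<forall>v\<in>W. y v = 0" using inner_on_self_eq_0D[OF assms(1)] by blast
  then have "inner_on W y (adj_mult W adj y) = 0" unfolding inner_on_def by simp
  then show ?thesis using True by simp
next
  case False
  then have pos: "inner_on W y y > 0"
    using inner_on_self_nonneg[of W y] by linarith
  define s where "s = sqrt (inner_on W y y)"
  have s: "s > 0" "s\<^sup>2 = inner_on W y y"
    unfolding s_def using pos by auto
  define z where "z = (\<lambda>v. y v / s)"
  have "inner_on W z z = inner_on W y y / s\<^sup>2"
    unfolding z_def inner_on_def by (simp add: sum_divide_distrib power2_eq_square)
  then have "inner_on W z (adj_mult W adj z) \<le> lam"
    using s pos by (intro sphere) simp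
  moreover have "adj_mult W adj z v = adj_mult W adj y v / s" for v
    unfolding z_def adj_mult_def by (simp add: sum_divide_distrib)
  then have "inner_on W z (adj_mult W adj z) = inner_on W y (adj_mult W adj y) / s\<^sup>2"
    unfolding z_def inner_on_def by (simp add: sum_divide_distrib power2_eq_square)
  ultimately have "inner_on W y (adj_mult W adj y) / s\<^sup>2 \<le> lam" by simp
  then show ?thesis using s pos by (simp add: divide_le_eq mult.commute)
qed

lemma linear_coeff_eq_0_if_nonpos:
  fixes b c :: real
  assumes "\<And>t. b * t + c * t\<^sup>2 \<le> 0"
  shows "b = 0"
proof -
  define d where "d = \<bar>c\<bar> + 1"
  have d: "d > 0" "d + c \<ge> 1" unfolding d_def by auto
  have "(b * (b / d) + c * (b / d)\<^sup>2) * d\<^sup>2 = b\<^sup>2 * (d + c)"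
    using d by (simp add: field_simps power2_eq_square)
  moreover have "(b * (b / d) + c * (b / d)\<^sup>2) * d\<^sup>2 \<le> 0"
    using assms[of "b / d"] zero_le_power2[of d] by (rule mult_nonpos_nonneg)
  moreover have "b\<^sup>2 * (d + c) \<ge> b\<^sup>2"
    using d by (metis mult_left_mono mult.right_neutral zero_le_power2)
  ultimately have "b\<^sup>2 \<le> 0" by linarith
  then show ?thesis by simp
qed

text \<open>Perturbing \<open>x\<close> in the direction of its residual \<open>r = A x - \<lambda> x\<close> changes
  \<open>\<langle>z, A z\<rangle> - \<lambda> \<langle>z, z\<rangle>\<close> to first order by \<open>2 t \<langle>r, r\<rangle>\<close>; maximality forces \<open>r = 0\<close>.\<close>

lemma adj_form_maximizer_is_eigenvector:
  assumes fin: "finite W" and sym: "symp_on W adj"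
    and bound: "\<And>y. inner_on W y (adj_mult W adj y) \<le> lam * inner_on W y y"
    and attained: "inner_on W x (adj_mult W adj x) = lam * inner_on W x x"
  shows "\<forall>v\<in>W. adj_mult W adj x v = lam * x v"
proof -
  define r where "r = (\<lambda>v. adj_mult W adj x v - lam * x v)"
  have residual: "inner_on W r (adj_mult W adj x) - lam * inner_on W r x = inner_on W r r"
    unfolding r_def inner_on_def by (simp add: algebra_simps sum_subtractf sum_distrib_left)
  have "inner_on W r (adj_mult W adj x) - lam * inner_on W r x = 0"
  proof (rule linear_coeff_eq_0_if_nonpos)
    fix t :: real
    have "inner_on W (\<lambda>v. x v + t * r v) (adj_mult W adj (\<lambda>v. x v + t * r v))
        \<le> lam * inner_on W (\<lambda>v. x v + t * r v) (\<lambda>v. x v + t * r v)"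
      by (rule bound)
    then show "(inner_on W r (adj_mult W adj x) - lam * inner_on W r x) * t
        + ((inner_on W r (adj_mult W adj r) - lam * inner_on W r r) / 2) * t\<^sup>2 \<le> 0"
      unfolding adj_form_add_scaled[OF fin sym] inner_on_add_scaled attained
      by (simp add: field_simps)
  qed
  then have "inner_on W r r = 0" using residual by simp
  then show ?thesis
    using inner_on_self_eq_0D[OF fin] unfolding r_def by force
qed

lemma finite_adj_eigenvalues:
  assumes fin: "finite W"
  shows "finite (adj_eigenvalues W adj)"
proof -
  define n where "n = card W"
  obtain f where f: "bij_betw f {0..<n} W"
    using ex_bij_betw_nat_finite[OF fin] n_def by blast
  define A :: "real mat" where "A = mat n n (\<lambda>(i, j). if adj (f i) (f j) then 1 else 0)"
  have "adj_eigenvalues W adj \<subseteq> spectrum A"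
  proof
    fix mu assume "mu \<in> adj_eigenvalues W adj"
    then obtain x where x0: "\<exists>v\<in>W. x v \<noteq> 0"
      and ev: "\<forall>v\<in>W. (\<Sum>u\<in>{u\<in>W. adj v u}. x u) = mu * x v"
      unfolding adj_eigenvalues_def by blast
    define v where "v = vec n (\<lambda>i. x (f i))"
    have "A *\<^sub>v v = mu \<cdot>\<^sub>v v"
    proof (rule eq_vecI)
      fix i assume "i < dim_vec (mu \<cdot>\<^sub>v v)"
      then have i: "i < n" unfolding v_def by simp
      then have fi: "f i \<in> W" using f by (auto simp: bij_betw_def)
      have "(A *\<^sub>v v) $ i = (\<Sum>j\<in>{0..<n}. (if adj (f i) (f j) then 1 else 0) * x (f j))"
        using i unfolding A_def v_def by (simp add: scalar_prod_def)
      also have "\<dots> = (\<Sum>u\<in>W. (if adj (f i) u then 1 else 0) * x u)"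
        using sum.reindex_bij_betw[OF f, of "\<lambda>u. (if adj (f i) u then 1 else 0) * x u"] by simp
      also have "\<dots> = (\<Sum>u\<in>{u\<in>W. adj (f i) u}. x u)"
        by (subst sum.inter_filter[OF fin]) (auto intro: sum.cong)
      also have "\<dots> = (mu \<cdot>\<^sub>v v) $ i" using ev fi i unfolding v_def by simp
      finally show "(A *\<^sub>v v) $ i = (mu \<cdot>\<^sub>v v) $ i" .
    qed (simp add: A_def v_def)
    moreover have "v \<noteq> 0\<^sub>v n"
    proof
      assume v0: "v = 0\<^sub>v n"
      obtain w where w: "w \<in> W" "x w \<noteq> 0" using x0 by blast
      then obtain i where i: "i < n" "f i = w" using f by (auto simp: bij_betw_def)
      then have "v $ i = 0" using v0 by simp
      then show False using i w unfolding v_def by simp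
    qed
    ultimately have "eigenvector A v mu" unfolding eigenvector_def A_def v_def by simp
    then show "mu \<in> spectrum A" unfolding spectrum_def eigenvalue_def by blast
  qed
  moreover have "A \<in> carrier_mat n n" unfolding A_def by simp
  then have "finite (spectrum A)" by (rule card_finite_spectrum(1))
  ultimately show ?thesis by (rule finite_subset)
qed

lemma adj_form_le_largest_adj_eigenvalue:
  assumes fin: "finite W" and sym: "symp_on W adj"
  shows "inner_on W y (adj_mult W adj y) \<le> largest_adj_eigenvalue W adj * inner_on W y y"
proof (cases "W = {}")
  case True
  then show ?thesis by (simp add: inner_on_def)
next
  case False
  obtain x where x1: "inner_on W x x = 1"
    and xmax: "\<And>y. inner_on W y y = 1 \<Longrightarrow>
      inner_on W y (adj_mult W adj y) \<le> inner_on W x (adj_mult W adj x)"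
    using adj_form_attains_max_on_unit_sphere[OF fin False] by blast
  define lam where "lam = inner_on W x (adj_mult W adj x)"
  have bound: "inner_on W z (adj_mult W adj z) \<le> lam * inner_on W z z" for z
    using adj_form_le_if_le_on_unit_sphere[OF fin] xmax unfolding lam_def by blast
  have "\<forall>v\<in>W. adj_mult W adj x v = lam * x v"
    using adj_form_maximizer_is_eigenvector[OF fin sym bound] x1 unfolding lam_def by simp
  moreover have "\<exists>v\<in>W. x v \<noteq> 0"
  proof (rule ccontr)
    assume "\<not> (\<exists>v\<in>W. x v \<noteq> 0)"
    then have "inner_on W x x = 0" unfolding inner_on_def by simp
    then show False using x1 by simp
  qed
  ultimately have "lam \<in> adj_eigenvalues W adj"
    unfolding adj_eigenvalues_def adj_mult_def by blast
  then have "lam \<le> largest_adj_eigenvalue W adj"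
    unfolding largest_adj_eigenvalue_def using finite_adj_eigenvalues[OF fin] by simp
  then have "lam * inner_on W y y \<le> largest_adj_eigenvalue W adj * inner_on W y y"
    using inner_on_self_nonneg by (rule mult_right_mono)
  then show ?thesis using bound[of y] by linarith
qed

lemma adj_form_indicator_ge_min_degree:
  assumes fin: "finite W" and "S \<subseteq> W"
    and degree: "\<And>v. v \<in> S \<Longrightarrow> c \<le> real (card {u\<in>W. adj v u \<and> u \<in> S})"
  shows "c * card S \<le> inner_on W (indicator S) (adj_mult W adj (indicator S))"
proof -
  have "c * card S = (\<Sum>v\<in>S. c)" by simp
  also have "\<dots> \<le> (\<Sum>v\<in>S. adj_mult W adj (indicator S) v)"
    using degree by (intro sum_mono) (simp add: adj_mult_indicator[OF fin])
  also have "\<dots> = inner_on W (indicator S) (adj_mult W adj (indicator S))"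
    using inner_on_indicator[OF fin \<open>S \<subseteq> W\<close>] by simp
  finally show ?thesis .
qed

lemma induced_min_degree_lt_largest_adj_eigenvalue:
  fixes c :: real
  assumes fin: "finite W" and sym: "symp_on W adj" and "S \<subseteq> W" "f \<in> W - S"
    and degree: "\<And>v. v \<in> S \<Longrightarrow> c \<le> real (card {u\<in>W. adj v u \<and> u \<in> S})"
    and joined: "\<exists>u\<in>S. adj f u"
  shows "c < largest_adj_eigenvalue W adj"
proof -
  \<comment> \<open>any \<open>t > 0\<close> with \<open>t c < 2\<close> makes the quotient of \<open>1\<^sub>S + t 1\<^sub>f\<close> exceed \<open>c\<close>\<close>
  define t where "t = 1 / (\<bar>c\<bar> + 1)"
  have t: "t > 0" "t * c < 2"
  proof -
    show "t > 0" unfolding t_def by simp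
    have "t * c \<le> \<bar>c\<bar> / (\<bar>c\<bar> + 1)" unfolding t_def by (simp add: divide_right_mono)
    also have "\<dots> < 1" by simp
    finally show "t * c < 2" by simp
  qed
  define y where "y = (\<lambda>v. indicator S v + t * indicator {f} v)"
  have f: "{f} \<subseteq> W" "f \<notin> S" using \<open>f \<in> W - S\<close> by auto
  have inner_S: "c * card S \<le> inner_on W (indicator S) (adj_mult W adj (indicator S))"
    using adj_form_indicator_ge_min_degree[OF fin \<open>S \<subseteq> W\<close> degree] .
  have "{u\<in>W. adj f u \<and> u \<in> S} \<noteq> {}" using joined \<open>S \<subseteq> W\<close> by blast
  then have "card {u\<in>W. adj f u \<and> u \<in> S} \<ge> 1"
    using fin by (simp add: Suc_le_eq card_gt_0_iff)
  then have inner_f_S: "inner_on W (indicator {f}) (adj_mult W adj (indicator S)) \<ge> 1"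
    by (simp add: inner_on_indicator[OF fin f(1)] adj_mult_indicator[OF fin])
  have inner_f_f: "inner_on W (indicator {f}) (adj_mult W adj (indicator {f})) \<ge> 0"
    by (simp add: inner_on_indicator[OF fin f(1)] adj_mult_indicator[OF fin])
  have norm_y: "inner_on W y y = card S + t\<^sup>2"
    unfolding y_def inner_on_add_scaled
    using f by (simp add: inner_on_indicator[OF fin] \<open>S \<subseteq> W\<close>)
  have "c * inner_on W y y < c * card S + 2 * t"
    using t by (simp add: norm_y algebra_simps power2_eq_square)
  also have "\<dots> \<le> inner_on W y (adj_mult W adj y)"
  proof -
    have "2 * t \<le> 2 * t * inner_on W (indicator {f}) (adj_mult W adj (indicator S))"
      using inner_f_S t(1) by simp
    moreover have "0 \<le> t\<^sup>2 * inner_on W (indicator {f}) (adj_mult W adj (indicator {f}))"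
      using inner_f_f by simp
    ultimately show ?thesis
      unfolding y_def adj_form_add_scaled[OF fin sym] using inner_S by linarith
  qed
  also have "\<dots> \<le> largest_adj_eigenvalue W adj * inner_on W y y"
    by (rule adj_form_le_largest_adj_eigenvalue[OF fin sym])
  finally show ?thesis
    using t(1) by (simp add: norm_y add_nonneg_pos)
qed

lemma simple_graph_finite_edges:
  assumes "simple_graph V E"
  shows "finite E"
proof -
  have "E \<subseteq> Pow V" using assms unfolding simple_graph_def by blast
  moreover have "finite (Pow V)" using assms unfolding simple_graph_def by simp
  ultimately show ?thesis by (rule finite_subset)
qed

lemma connected_graph_vertices_subset_edge_closed:
  assumes "connected_graph V E" "k \<in> K" "k \<in> V"
    and closed: "\<And>f. f \<in> E \<Longrightarrow> f \<inter> K \<noteq> {} \<Longrightarrow> f \<subseteq> K"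
  shows "V \<subseteq> K"
proof
  fix v assume "v \<in> V"
  then have "(\<lambda>x y. x \<in> V \<and> y \<in> V \<and> adjacent E x y)\<^sup>*\<^sup>* k v"
    using assms(1,3) unfolding connected_graph_def by blast
  then show "v \<in> K"
  proof (induction rule: rtranclp_induct)
    case base
    show ?case by fact
  next
    case (step y z)
    have "{y, z} \<in> E" using step.hyps(2) unfolding adjacent_def by simp
    moreover have "{y, z} \<inter> K \<noteq> {}" using step.IH by simp
    ultimately have "{y, z} \<subseteq> K" by (rule closed)
    then show ?case by simp
  qed
qed

lemma clique_has_leaving_edge:
  assumes "connected_graph V E" "\<not> complete_graph V E" "clique_of_order V E w K" "K \<noteq> {}"
  shows "\<exists>f\<in>E. f \<inter> K \<noteq> {} \<and> \<not> f \<subseteq> K"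
proof (rule ccontr)
  assume "\<not> ?thesis"
  then have closed: "\<And>f. f \<in> E \<Longrightarrow> f \<inter> K \<noteq> {} \<Longrightarrow> f \<subseteq> K" by blast
  obtain k where k: "k \<in> K" using assms(4) by blast
  have clique: "K \<subseteq> V" "\<And>u v. u \<in> K \<Longrightarrow> v \<in> K \<Longrightarrow> u \<noteq> v \<Longrightarrow> adjacent E u v"
    using assms(3) unfolding clique_of_order_def by auto
  have "V \<subseteq> K"
    using connected_graph_vertices_subset_edge_closed[OF assms(1) k _ closed] k clique(1) by blast
  then have "complete_graph V E"
    unfolding complete_graph_def using clique(2) by blast
  with assms(2) show False by contradiction
qed

definition clique_edges :: "'a set \<Rightarrow> 'a set set" where
  "clique_edges K = {e. e \<subseteq> K \<and> card e = 2}"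

lemma clique_edges_subset: "clique_of_order V E w K \<Longrightarrow> clique_edges K \<subseteq> E"
  unfolding clique_of_order_def clique_edges_def adjacent_def by (auto simp: card_2_iff)

lemma line_degree_within_clique_edges:
  assumes "finite K" "clique_edges K \<subseteq> E" "e \<in> clique_edges K"
  shows "2 * (card K - 2) \<le> card {u\<in>E. line_adj E e u \<and> u \<in> clique_edges K}"
proof -
  obtain a b where ab: "e = {a, b}" "a \<noteq> b" "a \<in> K" "b \<in> K"
    using assms(3) unfolding clique_edges_def by (auto simp: card_2_iff)
  define D where "D = K - {a, b}"
  define N where "N = (\<lambda>x. {a, x}) ` D \<union> (\<lambda>x. {b, x}) ` D"
  have "card D = card K - 2" unfolding D_def using ab assms(1) by simp
  moreover have "inj_on (\<lambda>x. {a, x}) D" "inj_on (\<lambda>x. {b, x}) D"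
    unfolding D_def inj_on_def by (auto simp: doubleton_eq_iff)
  moreover have "(\<lambda>x. {a, x}) ` D \<inter> (\<lambda>x. {b, x}) ` D = {}"
    unfolding D_def using ab by (auto simp: doubleton_eq_iff)
  moreover have "finite D" unfolding D_def using assms(1) by simp
  ultimately have card_N: "card N = 2 * (card K - 2)"
    unfolding N_def by (simp add: card_Un_disjoint card_image)
  have "{p, x} \<in> {u\<in>E. line_adj E e u \<and> u \<in> clique_edges K}"
    if "p \<in> {a, b}" "x \<in> D" for p x
  proof -
    have "{p, x} \<in> clique_edges K" "{p, x} \<noteq> e"
      using that ab unfolding D_def clique_edges_def by (auto simp: doubleton_eq_iff)
    then show ?thesis using assms(2,3) that unfolding line_adj_def by (auto simp: ab)
  qed
  then have "N \<subseteq> {u\<in>E. line_adj E e u \<and> u \<in> clique_edges K}"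
    unfolding N_def by blast
  moreover have "finite {u\<in>E. line_adj E e u \<and> u \<in> clique_edges K}"
    by (rule finite_subset[of _ "clique_edges K"]) (auto simp: clique_edges_def assms(1))
  ultimately show ?thesis
    using card_mono card_N by metis
qed

lemma leaving_edge_line_adj_clique_edge:
  assumes "clique_edges K \<subseteq> E" "f \<in> E" "f \<inter> K \<noteq> {}" "\<not> f \<subseteq> K" "card K \<ge> 2"
  shows "\<exists>u\<in>clique_edges K. line_adj E f u"
proof -
  obtain k where k: "k \<in> f" "k \<in> K" using assms(3) by blast
  have "\<not> K \<subseteq> {k}"
  proof
    assume "K \<subseteq> {k}"
    then have "card K \<le> card {k}" by (rule card_mono[rotated]) simp
    with assms(5) show False by simp
  qed
  then obtain c where c: "c \<in> K" "c \<noteq> k" by blast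
  have "{k, c} \<in> clique_edges K" unfolding clique_edges_def using k c by auto
  moreover have "line_adj E f {k, c}"
    using calculation assms(1,2,4) k c unfolding line_adj_def by auto
  ultimately show ?thesis by blast
qed

theorem corollary1:
  fixes V :: "'a set" and E :: "'a set set" and \<omega> :: nat
  assumes "\<omega> \<ge> 2"
    and "simple_graph V E"
    and "connected_graph V E"
    and "\<not> complete_graph V E"
    and "clique_regular \<omega> V E"
  shows "2 * real \<omega> - 4 < largest_adj_eigenvalue E (line_adj E)"
proof -
  obtain e where "e \<in> E" using assms(5) unfolding clique_regular_def by blast
  then obtain K where K: "clique_of_order V E \<omega> K"
    using assms(5) unfolding clique_regular_def by blast
  then have card_K: "card K = \<omega>" unfolding clique_of_order_def by simp
  then have "finite K" "K \<noteq> {}" using assms(1) by (auto intro: card_ge_0_finite)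
  obtain f where f: "f \<in> E" "f \<inter> K \<noteq> {}" "\<not> f \<subseteq> K"
    using clique_has_leaving_edge[OF assms(3,4) K \<open>K \<noteq> {}\<close>] by blast
  have edges_K: "clique_edges K \<subseteq> E" using K by (rule clique_edges_subset)
  show ?thesis
  proof (rule induced_min_degree_lt_largest_adj_eigenvalue)
    show "finite E" using assms(2) by (rule simple_graph_finite_edges)
    show "symp_on E (line_adj E)" by (auto simp: symp_on_def line_adj_def)
    show "f \<in> E - clique_edges K" using f unfolding clique_edges_def by auto
    show "\<exists>u\<in>clique_edges K. line_adj E f u"
      using leaving_edge_line_adj_clique_edge[OF edges_K f] card_K assms(1) by simp
    fix e assume "e \<in> clique_edges K"
    then have "2 * (\<omega> - 2) \<le> card {u\<in>E. line_adj E e u \<and> u \<in> clique_edges K}"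
      using line_degree_within_clique_edges[OF \<open>finite K\<close> edges_K] card_K by simp
    then show "2 * real \<omega> - 4 \<le> real (card {u\<in>E. line_adj E e u \<and> u \<in> clique_edges K})"
      using assms(1) by linarith
  qed (fact edges_K)
qed

end
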